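(* Let $0<|q|<1$ and let $a,b$ be complex numbers with $aq^j\neq1$ for all integers $j\ge0$. Then \[ \frac{(-bq;q)_\infty\,(abq;q)_\infty}{(-q;q)_\infty\,(a;q)_\infty}=\sum_{k=0}^\infty\frac{(b;q)_k}{(q;q)_k}\,\frac{(ab^2q^{2+k};q^2)_\infty}{(aq^k;q^2)_\infty}\,(-1)^kq^k . \]
   Context: For $0<|q|<1$ and base $p\in\{q,q^2\}$: $(x;p)_\infty=\prod_{j\ge0}(1-xp^j)$ and $(x;p)_k=(x;p)_\infty/(xp^k;p)_\infty$. *)

theory Defs
  imports "HOL-Analysis.Analysis"
begin

definition qpoch_inf :: "complex \<Rightarrow> complex \<Rightarrow> complex" where
  "qpoch_inf x p = (\<Prod>j. 1 - x * p ^ j)"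

definition qpoch :: "complex \<Rightarrow> complex \<Rightarrow> nat \<Rightarrow> complex" where
  "qpoch x p k = (\<Prod>j<k. 1 - x * p ^ j)"

end

(*
  For |a| < 1, expand each ratio (a b^2 q^(2+k); q^2)_oo / (a q^k; q^2)_oo by the q-binomial
  theorem in base q^2. The resulting double series converges absolutely; summing it over k
  first, again by the q-binomial theorem (now at z = -q^(n+1)), and using
  (x^2; q^2)_n = (x; q)_n (-x; q)_n collapses it to the q-binomial series in a with c = b q,
  whose sum gives the right-hand side.

  For general a, multiply both sides by (a; q)_oo. The cleared series converges locally
  uniformly, so it is an entire function of a, as is the cleared right-hand side; the two
  agree on the unit disc, hence everywhere.

  The q-binomial theorem itself comes from the functional equation
  (1 - z) F(z) = (1 - c z) F(p z) of F(z) = sum_n (c; p)_n / (p; p)_n z^n: iterating it gives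
  F(z) (z; p)_N = (c z; p)_N F(z p^N), and F(z p^N) tends to F(0) = 1.
*)

theory Submission
  imports Defs "HOL-Complex_Analysis.Conformal_Mappings"
begin

lemma qpoch_0 [simp]: "qpoch x p 0 = 1"
  by (simp add: qpoch_def)

lemma qpoch_Suc: "qpoch x p (Suc n) = qpoch x p n * (1 - x * p ^ n)"
  by (simp add: qpoch_def)

lemma qpoch_add: "qpoch x p (k + n) = qpoch x p k * qpoch (x * p ^ k) p n"
  by (induction n) (simp_all add: qpoch_Suc power_add mult_ac)

lemma qpoch_double: "qpoch x p (2 * n) = qpoch x (p\<^sup>2) n * qpoch (x * p) (p\<^sup>2) n"
proof (induction n)
  case 0
  show ?case by simp
next
  case (Suc n)
  have "qpoch x p (2 * Suc n) = qpoch x p (2 * n) * (1 - x * p ^ (2 * n)) * (1 - x * p ^ Suc (2 * n))"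
    by (simp only: mult_Suc_right add_2_eq_Suc qpoch_Suc)
  also have "\<dots> = qpoch x (p\<^sup>2) (Suc n) * qpoch (x * p) (p\<^sup>2) (Suc n)"
    by (simp only: qpoch_Suc Suc.IH power_mult power_Suc) (simp only: mult_ac)
  finally show ?case .
qed

lemma qpoch_square: "qpoch (x\<^sup>2) (p\<^sup>2) n = qpoch x p n * qpoch (- x) p n"
  unfolding qpoch_def prod.distrib[symmetric]
  by (rule prod.cong) (simp_all add: power2_eq_square power_mult_distrib algebra_simps flip: power_mult)

lemma norm_mult_power_less_one:
  fixes x p :: complex
  assumes "norm p < 1" "norm x < 1"
  shows "norm (x * p ^ j) < 1"
proof -
  have "norm x * norm p ^ j \<le> norm x"
    using assms by (intro mult_left_le power_le_one) auto
  with assms show ?thesis by (simp add: norm_mult norm_power)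
qed

lemma norm_power2_less_one: "norm (p :: complex) < 1 \<Longrightarrow> norm (p\<^sup>2) < 1"
  by (simp add: norm_power abs_square_less_1)

lemma qpoch_nonzero:
  assumes "norm p < 1" "norm x < 1"
  shows "qpoch x p n \<noteq> 0"
  using norm_mult_power_less_one[OF assms] by (auto simp: qpoch_def) (metis norm_one order.irrefl)

lemma norm_qpoch_le:
  assumes p: "norm p < 1" and x: "norm x \<le> R"
  shows "norm (qpoch x p n) \<le> exp (R / (1 - norm p))"
proof -
  have "norm (qpoch x p n) \<le> (\<Prod>j<n. 1 + norm x * norm p ^ j)"
    unfolding qpoch_def prod_norm[symmetric]
    by (intro prod_mono conjI norm_ge_zero) (metis norm_one norm_mult norm_power norm_triangle_ineq4)
  also have "\<dots> \<le> exp (\<Sum>j<n. norm x * norm p ^ j)"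
    by (intro prod_le_exp_sum) auto
  also have "(\<Sum>j<n. norm x * norm p ^ j) \<le> (\<Sum>j. norm x * norm p ^ j)"
    using p by (intro sum_le_suminf summable_mult summable_geometric) auto
  also have "\<dots> = norm x / (1 - norm p)"
    using p by (simp add: suminf_mult suminf_geometric)
  also have "\<dots> \<le> R / (1 - norm p)"
    using p x by (intro divide_right_mono) auto
  finally show ?thesis by simp
qed

lemma convergent_prod_qpoch:
  fixes x p :: complex
  assumes "norm p < 1"
  shows "convergent_prod (\<lambda>j. 1 - x * p ^ j)"
proof -
  have "summable (\<lambda>j. norm x * norm p ^ j)"
    using assms by (intro summable_mult summable_geometric) auto
  hence "summable (\<lambda>j. norm ((1 - x * p ^ j) - 1))"
    by (simp add: norm_mult norm_power)
  thus ?thesis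
    by (intro abs_convergent_prod_imp_convergent_prod summable_imp_abs_convergent_prod)
qed

lemma qpoch_tendsto_qpoch_inf:
  assumes "norm p < 1"
  shows "(\<lambda>n. qpoch x p n) \<longlonglongrightarrow> qpoch_inf x p"
  using convergent_prod_LIMSEQ[OF convergent_prod_qpoch[OF assms, of x]]
  unfolding qpoch_def qpoch_inf_def by (simp only: LIMSEQ_lessThan_iff_atMost)

lemma qpoch_inf_split:
  assumes "norm p < 1"
  shows "qpoch_inf x p = qpoch x p k * qpoch_inf (x * p ^ k) p"
proof (rule LIMSEQ_unique)
  show "(\<lambda>n. qpoch x p (n + k)) \<longlonglongrightarrow> qpoch_inf x p"
    using LIMSEQ_ignore_initial_segment[OF qpoch_tendsto_qpoch_inf[OF assms]] .
  show "(\<lambda>n. qpoch x p (n + k)) \<longlonglongrightarrow> qpoch x p k * qpoch_inf (x * p ^ k) p"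
    by (subst add.commute, subst qpoch_add) (intro tendsto_mult tendsto_const qpoch_tendsto_qpoch_inf assms)
qed

lemma qpoch_inf_double:
  assumes "norm p < 1"
  shows "qpoch_inf x p = qpoch_inf x (p\<^sup>2) * qpoch_inf (x * p) (p\<^sup>2)"
proof (rule LIMSEQ_unique)
  have "filterlim (\<lambda>n::nat. 2 * n) sequentially sequentially"
    by (intro filterlim_subseq) (auto simp: strict_mono_def)
  thus "(\<lambda>n. qpoch x p (2 * n)) \<longlonglongrightarrow> qpoch_inf x p"
    using filterlim_compose[OF qpoch_tendsto_qpoch_inf[OF assms]] by blast
  show "(\<lambda>n. qpoch x p (2 * n)) \<longlonglongrightarrow> qpoch_inf x (p\<^sup>2) * qpoch_inf (x * p) (p\<^sup>2)"
    unfolding qpoch_double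
    by (intro tendsto_mult qpoch_tendsto_qpoch_inf norm_power2_less_one assms)
qed

lemma qpoch_inf_nonzero:
  assumes "norm p < 1" "\<And>j. x * p ^ j \<noteq> 1"
  shows "qpoch_inf x p \<noteq> 0"
  unfolding qpoch_inf_def using assms by (intro prodinf_nonzero convergent_prod_qpoch) auto

lemma qpoch_inf_nonzero_small:
  assumes "norm p < 1" "norm x < 1"
  shows "qpoch_inf x p \<noteq> 0"
  using norm_mult_power_less_one[OF assms] by (intro qpoch_inf_nonzero assms(1)) (metis norm_one order.irrefl)

lemma norm_qpoch_inf_le:
  assumes "norm p < 1" "norm x \<le> R"
  shows "norm (qpoch_inf x p) \<le> exp (R / (1 - norm p))"
  by (rule LIMSEQ_le_const2[OF tendsto_norm[OF qpoch_tendsto_qpoch_inf[OF assms(1)]]])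
    (use norm_qpoch_le[OF assms] in auto)

lemma qpoch_bounded_below:
  assumes p: "norm p < 1"
  shows "\<exists>d>0. \<forall>n. d \<le> norm (qpoch p p n)"
proof -
  define E where "E = exp (1 / (1 - norm p))"
  have "qpoch_inf p p \<noteq> 0"
    by (rule qpoch_inf_nonzero_small[OF p p])
  hence pos: "norm (qpoch_inf p p) / E > 0"
    by (simp add: E_def)
  have "norm (qpoch_inf p p) / E \<le> norm (qpoch p p n)" for n
  proof -
    have "norm (p * p ^ n) \<le> 1"
      using p by (simp add: norm_mult norm_power power_le_one mult_le_one)
    hence "norm (qpoch_inf (p * p ^ n) p) \<le> E"
      unfolding E_def by (rule norm_qpoch_inf_le[OF p])
    hence "norm (qpoch_inf p p) \<le> norm (qpoch p p n) * E"
      by (subst qpoch_inf_split[OF p, of p n]) (simp add: norm_mult mult_left_mono)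
    thus ?thesis by (simp add: E_def field_simps)
  qed
  with pos show ?thesis by blast
qed

lemma qbinomial_coeff_bounded:
  assumes p: "norm p < 1"
  shows "\<exists>M. \<forall>n. norm (qpoch c p n / qpoch p p n) \<le> M"
proof -
  obtain d where d: "d > 0" "\<And>n. d \<le> norm (qpoch p p n)"
    using qpoch_bounded_below[OF p] by blast
  have "norm (qpoch c p n / qpoch p p n) \<le> exp (norm c / (1 - norm p)) / d" for n
    unfolding norm_divide using d norm_qpoch_le[OF p order_refl, of c n]
    by (intro frac_le) auto
  thus ?thesis by blast
qed

lemma holomorphic_on_UNIV_uniform_limit:
  fixes F :: "nat \<Rightarrow> complex \<Rightarrow> complex"
  assumes hol: "\<And>n. F n holomorphic_on UNIV"
    and unif: "\<And>x. uniformly_convergent_on (cball x 1) F"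
    and lim: "\<And>z. (\<lambda>n. F n z) \<longlonglongrightarrow> g z"
  shows "g holomorphic_on UNIV"
proof (rule holomorphic_uniform_sequence[OF open_UNIV hol])
  fix x :: complex
  have "uniform_limit (cball x 1) F (\<lambda>z. lim (\<lambda>n. F n z)) sequentially"
    using unif[of x] by (simp add: uniformly_convergent_uniform_limit_iff)
  moreover have "(\<lambda>z. lim (\<lambda>n. F n z)) = g"
    using lim by (intro ext limI)
  ultimately show "\<exists>d>0. cball x d \<subseteq> UNIV \<and> uniform_limit (cball x d) F g sequentially"
    by (intro exI[of _ 1]) auto
qed

lemma qpoch_inf_holomorphic:
  assumes p: "norm p < 1" and f: "f holomorphic_on UNIV"
  shows "(\<lambda>z. qpoch_inf (f z) p) holomorphic_on UNIV"
proof (rule holomorphic_on_UNIV_uniform_limit[where F = "\<lambda>n z. qpoch (f z) p n"])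
  show "(\<lambda>z. qpoch (f z) p n) holomorphic_on UNIV" for n
    unfolding qpoch_def using f by (intro holomorphic_intros)
  show "(\<lambda>n. qpoch (f z) p n) \<longlonglongrightarrow> qpoch_inf (f z) p" for z
    by (rule qpoch_tendsto_qpoch_inf[OF p])
  fix x :: complex
  have cont: "continuous_on (cball x 1) f"
    using f by (intro holomorphic_on_imp_continuous_on) (auto elim: holomorphic_on_subset)
  obtain B where B: "\<And>z. z \<in> cball x 1 \<Longrightarrow> norm (f z) \<le> B"
    using compact_imp_bounded[OF compact_continuous_image[OF cont compact_cball]]
    unfolding bounded_iff by blast
  have "uniformly_convergent_on (cball x 1) (\<lambda>N z. \<Prod>n<N. 1 - f z * p ^ n)"
  proof (rule uniformly_convergent_on_prod')
    show "continuous_on (cball x 1) (\<lambda>z. 1 - f z * p ^ n)" for n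
      using cont by (intro continuous_intros)
    show "uniformly_convergent_on (cball x 1) (\<lambda>N z. \<Sum>n<N. norm (1 - f z * p ^ n - 1))"
    proof (rule Weierstrass_m_test')
      show "summable (\<lambda>n. B * norm p ^ n)"
        using p by (intro summable_mult summable_geometric) auto
      show "norm (norm (1 - f z * p ^ n - 1)) \<le> B * norm p ^ n" if "z \<in> cball x 1" for n z
        using B[OF that] by (simp add: norm_mult norm_power mult_right_mono)
    qed
  qed simp
  thus "uniformly_convergent_on (cball x 1) (\<lambda>n z. qpoch (f z) p n)"
    unfolding qpoch_def .
qed

definition qbinomial_series :: "complex \<Rightarrow> complex \<Rightarrow> complex \<Rightarrow> complex" where
  "qbinomial_series c p z = (\<Sum>n. qpoch c p n / qpoch p p n * z ^ n)"

lemma qbinomial_series_sums: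
  assumes p: "norm p < 1" and z: "norm z < 1"
  shows "(\<lambda>n. qpoch c p n / qpoch p p n * z ^ n) sums qbinomial_series c p z"
proof -
  obtain M where M: "\<And>n. norm (qpoch c p n / qpoch p p n) \<le> M"
    using qbinomial_coeff_bounded[OF p] by blast
  have "summable (\<lambda>n. norm (qpoch c p n / qpoch p p n) * norm z ^ n)"
    by (rule Abel_lemma[where M = M, OF norm_ge_zero z]) (use M in simp)
  hence "summable (\<lambda>n. norm (qpoch c p n / qpoch p p n * z ^ n))"
    by (simp only: norm_mult norm_power)
  hence "summable (\<lambda>n. qpoch c p n / qpoch p p n * z ^ n)"
    by (rule summable_norm_cancel)
  thus ?thesis
    unfolding qbinomial_series_def by (rule summable_sums)
qed

lemma qbinomial_series_functional_eq:
  assumes p: "norm p < 1" and z: "norm z < 1"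
  shows "(1 - z) * qbinomial_series c p z = (1 - c * z) * qbinomial_series c p (p * z)"
proof -
  define A where "A n = qpoch c p n / qpoch p p n" for n
  define f where "f = qbinomial_series c p"
  have sums: "(\<lambda>n. A n * w ^ n) sums f w" if "norm w < 1" for w
    unfolding A_def f_def using p that by (rule qbinomial_series_sums)
  have pz: "norm (p * z) < 1"
    using norm_mult_power_less_one[OF p z, of 1] by (simp add: mult.commute)
  have A_Suc: "A (Suc n) * (1 - p ^ Suc n) = A n * (1 - c * p ^ n)" for n
    using qpoch_nonzero[OF p p, of n] qpoch_nonzero[OF p p, of "Suc n"]
    by (simp add: A_def qpoch_Suc field_simps)
  have shift: "A (Suc n) * (1 - p ^ Suc n) * z ^ Suc n = z * (A n * (1 - c * p ^ n) * z ^ n)" for n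
    by (simp only: A_Suc[symmetric] power_Suc[of z]) (simp only: mult_ac)
  have diff: "(\<lambda>n. A n * (1 - p ^ n) * z ^ n) sums (f z - f (p * z))"
    using sums_diff[OF sums[OF z] sums[OF pz]] by (simp add: algebra_simps power_mult_distrib)
  have "(\<lambda>n. z * (A n * (1 - c * p ^ n) * z ^ n)) sums (z * (f z - c * f (p * z)))"
    using sums_mult[OF sums_diff[OF sums[OF z] sums_mult[OF sums[OF pz], of c]], of z]
    by (simp add: algebra_simps power_mult_distrib)
  hence "(\<lambda>n. A (Suc n) * (1 - p ^ Suc n) * z ^ Suc n) sums (z * (f z - c * f (p * z)))"
    by (simp only: shift)
  hence "(\<lambda>n. A n * (1 - p ^ n) * z ^ n) sums (z * (f z - c * f (p * z)))"
    by (subst (asm) sums_Suc_iff) simp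
  with diff have "f z - f (p * z) = z * (f z - c * f (p * z))"
    using sums_unique2 by blast
  thus ?thesis
    by (simp add: f_def algebra_simps)
qed

lemma qbinomial_series_iterate:
  assumes p: "norm p < 1" and z: "norm z < 1"
  shows "qbinomial_series c p z * qpoch z p N = qpoch (c * z) p N * qbinomial_series c p (z * p ^ N)"
proof (induction N)
  case 0
  show ?case by simp
next
  case (Suc N)
  have "qbinomial_series c p z * qpoch z p (Suc N)
      = qpoch (c * z) p N * ((1 - z * p ^ N) * qbinomial_series c p (z * p ^ N))"
    using Suc.IH by (simp add: qpoch_Suc mult_ac)
  also have "\<dots> = qpoch (c * z) p N * ((1 - c * (z * p ^ N)) * qbinomial_series c p (p * (z * p ^ N)))"
    by (simp only: qbinomial_series_functional_eq[OF p norm_mult_power_less_one[OF p z]])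
  also have "\<dots> = qpoch (c * z) p (Suc N) * qbinomial_series c p (z * p ^ Suc N)"
    by (simp add: qpoch_Suc mult_ac)
  finally show ?case .
qed

lemma qbinomial_series_tendsto_one:
  assumes p: "norm p < 1"
  shows "(\<lambda>N. qbinomial_series c p (z * p ^ N)) \<longlonglongrightarrow> 1"
proof -
  have "summable (\<lambda>n. qpoch c p n / qpoch p p n * (1/2) ^ n)"
    using qbinomial_series_sums[OF p, of "1/2"] by (auto simp: sums_iff)
  hence "isCont (qbinomial_series c p) 0"
    unfolding qbinomial_series_def by (rule isCont_powser) simp
  moreover have "(\<lambda>N. z * p ^ N) \<longlonglongrightarrow> 0"
    using p by (intro tendsto_mult_right_zero LIMSEQ_power_zero) simp
  ultimately have "(\<lambda>N. qbinomial_series c p (z * p ^ N)) \<longlonglongrightarrow> qbinomial_series c p 0"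
    by (rule isCont_tendsto_compose)
  moreover have "qbinomial_series c p 0 = 1"
    unfolding qbinomial_series_def by (subst powser_zero) simp
  ultimately show ?thesis by simp
qed

theorem qbinomial_theorem:
  assumes p: "norm p < 1" and z: "norm z < 1"
  shows "(\<lambda>n. qpoch c p n / qpoch p p n * z ^ n) sums (qpoch_inf (c * z) p / qpoch_inf z p)"
proof -
  have "(\<lambda>N. qbinomial_series c p z * qpoch z p N) \<longlonglongrightarrow> qbinomial_series c p z * qpoch_inf z p"
    by (intro tendsto_mult tendsto_const qpoch_tendsto_qpoch_inf p)
  moreover have "(\<lambda>N. qbinomial_series c p z * qpoch z p N) \<longlonglongrightarrow> qpoch_inf (c * z) p * 1"
    unfolding qbinomial_series_iterate[OF p z]
    by (intro tendsto_mult qpoch_tendsto_qpoch_inf qbinomial_series_tendsto_one p)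
  ultimately have "qbinomial_series c p z * qpoch_inf z p = qpoch_inf (c * z) p"
    using LIMSEQ_unique by fastforce
  hence "qbinomial_series c p z = qpoch_inf (c * z) p / qpoch_inf z p"
    using qpoch_inf_nonzero_small[OF p z] by (simp add: field_simps)
  thus ?thesis
    using qbinomial_series_sums[OF p z, of c] by simp
qed

lemma sums_of_has_sum_Sigma:
  fixes f :: "nat \<Rightarrow> nat \<Rightarrow> complex"
  assumes T: "((\<lambda>(x, y). f x y) has_sum T) (UNIV \<times> UNIV)"
    and F: "\<And>x. f x sums F x"
  shows "F sums T"
proof -
  have "(f x has_sum F x) UNIV" for x
  proof -
    have "f x summable_on UNIV"
      by (rule summable_on_SigmaD1[OF has_sum_imp_summable[OF T]]) simp
    hence "(f x has_sum infsum (f x) UNIV) UNIV"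
      by (simp add: summable_iff_has_sum_infsum)
    moreover from this have "infsum (f x) UNIV = F x"
      using has_sum_imp_sums F sums_unique2 by blast
    ultimately show ?thesis by simp
  qed
  hence "(F has_sum T) UNIV"
    by (intro has_sum_Sigma'[OF T]) simp
  thus ?thesis
    by (rule has_sum_imp_sums)
qed

lemma sums_swap_dominated:
  fixes f :: "nat \<Rightarrow> nat \<Rightarrow> complex" and g :: "nat \<Rightarrow> nat \<Rightarrow> real"
  assumes bound: "\<And>k n. norm (f k n) \<le> g k n"
    and g: "\<And>k. g k sums G k" and G: "summable G"
    and rows: "\<And>k. f k sums F k"
    and columns: "\<And>n. (\<lambda>k. f k n) sums H n"
    and H: "H sums S"
  shows "F sums S"
proof -
  have g_nonneg: "g k n \<ge> 0" for k n
    by (rule order_trans[OF norm_ge_zero bound])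
  have "G k \<ge> 0" for k
    by (rule sums_le[OF _ sums_zero g]) (use g_nonneg in auto)
  hence "G summable_on UNIV"
    using sums_nonneg_imp_has_sum[OF summable_sums[OF G]] has_sum_imp_summable by blast
  moreover have "(g k has_sum G k) UNIV" for k
    by (rule sums_nonneg_imp_has_sum[OF g]) (use g_nonneg in auto)
  ultimately have "(\<lambda>(k, n). g k n) summable_on UNIV \<times> UNIV"
    by (intro summable_on_SigmaI[where g = G]) (auto simp: g_nonneg)
  hence "(\<lambda>x. norm ((\<lambda>(k, n). f k n) x)) summable_on UNIV \<times> UNIV"
    by (rule Infinite_Sum.abs_summable_on_comparison_test') (auto simp: bound)
  then obtain T where T: "((\<lambda>(k, n). f k n) has_sum T) (UNIV \<times> UNIV)"
    using abs_summable_summable summable_on_def by blast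
  have "F sums T"
    using T rows by (rule sums_of_has_sum_Sigma)
  moreover have "((\<lambda>(n, k). f k n) has_sum T) (UNIV \<times> UNIV)"
    using T by (subst (asm) has_sum_swap) (simp add: case_prod_unfold)
  hence "H sums T"
    using columns by (rule sums_of_has_sum_Sigma[where f = "\<lambda>n k. f k n"])
  ultimately show ?thesis
    using H sums_unique2 by metis
qed

lemma qpoch_square_ratio_eq:
  assumes q: "norm q < 1"
  shows "qpoch ((b * q)\<^sup>2) (q\<^sup>2) n / qpoch (q\<^sup>2) (q\<^sup>2) n
           * (qpoch_inf (- b * q * q ^ n) q / qpoch_inf (- q * q ^ n) q)
         = qpoch_inf (- b * q) q / qpoch_inf (- q) q * (qpoch (b * q) q n / qpoch q q n)"
proof -
  have minus_q: "norm (- q) < 1"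
    using q by simp
  have "qpoch_inf (- q * q ^ n) q \<noteq> 0"
    by (rule qpoch_inf_nonzero_small[OF q norm_mult_power_less_one[OF q minus_q]])
  moreover have "qpoch (- q) q n \<noteq> 0"
    by (rule qpoch_nonzero[OF q minus_q])
  moreover have "qpoch q q n \<noteq> 0"
    by (rule qpoch_nonzero[OF q q])
  ultimately show ?thesis
    using qpoch_square[of "b * q" q n] qpoch_square[of q q n]
      qpoch_inf_split[OF q, of "- b * q" n] qpoch_inf_split[OF q, of "- q" n]
    by (simp add: field_simps)
qed

text \<open>The double series obtained by expanding the \<open>k\<close>-th term of the series by the
  q-binomial theorem in base \<open>q\<^sup>2\<close>.\<close>

definition double_term :: "complex \<Rightarrow> complex \<Rightarrow> complex \<Rightarrow> nat \<Rightarrow> nat \<Rightarrow> complex" where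
  "double_term q b a k n = qpoch b q k / qpoch q q k * (-1) ^ k * q ^ k
     * (qpoch ((b * q)\<^sup>2) (q\<^sup>2) n / qpoch (q\<^sup>2) (q\<^sup>2) n * (a * q ^ k) ^ n)"

lemma norm_double_term_le:
  assumes q: "norm q < 1"
  shows "\<exists>M. \<forall>k n. norm (double_term q b a k n) \<le> M * norm q ^ k * norm a ^ n"
proof -
  obtain MC where MC: "\<And>k. norm (qpoch b q k / qpoch q q k) \<le> MC"
    using qbinomial_coeff_bounded[OF q] by blast
  obtain MB where MB: "\<And>n. norm (qpoch ((b * q)\<^sup>2) (q\<^sup>2) n / qpoch (q\<^sup>2) (q\<^sup>2) n) \<le> MB"
    using qbinomial_coeff_bounded[OF norm_power2_less_one[OF q]] by blast
  have "MC \<ge> 0" "MB \<ge> 0"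
    using order_trans[OF norm_ge_zero MC] order_trans[OF norm_ge_zero MB] by blast+
  have "norm (double_term q b a k n) \<le> MC * MB * norm q ^ k * norm a ^ n" for k n
  proof -
    have "norm ((a * q ^ k) ^ n) \<le> norm a ^ n"
      using q by (simp add: norm_mult norm_power power_mult_distrib mult_left_le power_le_one)
    hence "norm (double_term q b a k n) \<le> MC * norm q ^ k * (MB * norm a ^ n)"
      unfolding double_term_def norm_mult norm_power norm_minus_cancel norm_one power_one mult_1_right
      using \<open>MC \<ge> 0\<close> \<open>MB \<ge> 0\<close> by (intro mult_mono MC MB mult_right_mono) auto
    thus ?thesis
      by (simp add: mult_ac)
  qed
  thus ?thesis
    by blast
qed

lemma double_term_row_sums:
  assumes q: "norm q < 1" and a: "norm a < 1"
  shows "double_term q b a k sums (qpoch b q k / qpoch q q k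
           * (qpoch_inf (a * b\<^sup>2 * q ^ (2 + k)) (q\<^sup>2) / qpoch_inf (a * q ^ k) (q\<^sup>2)) * (-1) ^ k * q ^ k)"
proof -
  have "(\<lambda>n. qpoch ((b * q)\<^sup>2) (q\<^sup>2) n / qpoch (q\<^sup>2) (q\<^sup>2) n * (a * q ^ k) ^ n)
      sums (qpoch_inf ((b * q)\<^sup>2 * (a * q ^ k)) (q\<^sup>2) / qpoch_inf (a * q ^ k) (q\<^sup>2))"
    using norm_mult_power_less_one[OF q a] by (intro qbinomial_theorem norm_power2_less_one q)
  also have "(b * q)\<^sup>2 * (a * q ^ k) = a * b\<^sup>2 * q ^ (2 + k)"
    by (simp add: power_add power_mult_distrib power2_eq_square mult_ac)
  finally have "(\<lambda>n. qpoch b q k / qpoch q q k * (-1) ^ k * q ^ k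
      * (qpoch ((b * q)\<^sup>2) (q\<^sup>2) n / qpoch (q\<^sup>2) (q\<^sup>2) n * (a * q ^ k) ^ n))
      sums (qpoch b q k / qpoch q q k * (-1) ^ k * q ^ k
      * (qpoch_inf (a * b\<^sup>2 * q ^ (2 + k)) (q\<^sup>2) / qpoch_inf (a * q ^ k) (q\<^sup>2)))"
    by (rule sums_mult)
  thus ?thesis
    unfolding double_term_def by (simp only: mult_ac)
qed

lemma double_term_column_sums:
  assumes q: "norm q < 1"
  shows "(\<lambda>k. double_term q b a k n)
           sums (qpoch_inf (- b * q) q / qpoch_inf (- q) q * (qpoch (b * q) q n / qpoch q q n * a ^ n))"
proof -
  define B where "B = qpoch ((b * q)\<^sup>2) (q\<^sup>2) n / qpoch (q\<^sup>2) (q\<^sup>2) n"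
  have "norm (- q * q ^ n) < 1"
    using norm_mult_power_less_one[OF q, of "- q"] q by simp
  hence "(\<lambda>k. qpoch b q k / qpoch q q k * (- q * q ^ n) ^ k)
      sums (qpoch_inf (b * (- q * q ^ n)) q / qpoch_inf (- q * q ^ n) q)"
    using q by (rule qbinomial_theorem[rotated])
  hence "(\<lambda>k. B * a ^ n * (qpoch b q k / qpoch q q k * (- q * q ^ n) ^ k))
      sums (B * a ^ n * (qpoch_inf (b * (- q * q ^ n)) q / qpoch_inf (- q * q ^ n) q))"
    by (rule sums_mult)
  moreover have "B * a ^ n * (qpoch b q k / qpoch q q k * (- q * q ^ n) ^ k) = double_term q b a k n" for k
  proof -
    have "(- q * q ^ n) ^ k = (-1) ^ k * (q * q ^ n) ^ k"
      by (metis power_minus mult_minus_left)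
    also have "\<dots> = (-1) ^ k * q ^ k * (q ^ k) ^ n"
      by (simp add: power_mult_distrib mult.commute[of n k] flip: power_mult)
    finally show ?thesis
      by (simp add: double_term_def B_def power_mult_distrib mult_ac)
  qed
  moreover have "B * a ^ n * (qpoch_inf (b * (- q * q ^ n)) q / qpoch_inf (- q * q ^ n) q)
      = qpoch_inf (- b * q) q / qpoch_inf (- q) q * (qpoch (b * q) q n / qpoch q q n * a ^ n)"
  proof -
    have "b * (- q * q ^ n) = - b * q * q ^ n"
      by simp
    moreover have "B * (qpoch_inf (- b * q * q ^ n) q / qpoch_inf (- q * q ^ n) q)
        = qpoch_inf (- b * q) q / qpoch_inf (- q) q * (qpoch (b * q) q n / qpoch q q n)"
      unfolding B_def by (rule qpoch_square_ratio_eq[OF q])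
    ultimately show ?thesis
      by (metis mult.assoc mult.commute)
  qed
  ultimately show ?thesis
    by simp
qed

lemma series_sums_small:
  fixes q a b :: complex
  assumes q: "norm q < 1" and a: "norm a < 1"
  shows "(\<lambda>k. qpoch b q k / qpoch q q k
            * (qpoch_inf (a * b\<^sup>2 * q ^ (2 + k)) (q\<^sup>2) / qpoch_inf (a * q ^ k) (q\<^sup>2))
            * (-1) ^ k * q ^ k)
         sums (qpoch_inf (- b * q) q * qpoch_inf (a * b * q) q
               / (qpoch_inf (- q) q * qpoch_inf a q))"
proof -
  obtain M where M: "\<And>k n. norm (double_term q b a k n) \<le> M * norm q ^ k * norm a ^ n"
    using norm_double_term_le[OF q] by blast
  have rows_bound: "(\<lambda>n. M * norm q ^ k * norm a ^ n) sums (M * norm q ^ k / (1 - norm a))" for k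
    using sums_mult[OF geometric_sums[of "norm a"], of "M * norm q ^ k"] a by simp
  have total_bound: "summable (\<lambda>k. M * norm q ^ k / (1 - norm a))"
    using q by (intro summable_divide summable_mult summable_geometric) auto
  have "(\<lambda>n. qpoch (b * q) q n / qpoch q q n * a ^ n) sums (qpoch_inf (a * b * q) q / qpoch_inf a q)"
    using qbinomial_theorem[OF q a, of "b * q"] by (simp only: mult_ac)
  from sums_mult[OF this, of "qpoch_inf (- b * q) q / qpoch_inf (- q) q"]
  have "(\<lambda>n. qpoch_inf (- b * q) q / qpoch_inf (- q) q * (qpoch (b * q) q n / qpoch q q n * a ^ n))
      sums (qpoch_inf (- b * q) q * qpoch_inf (a * b * q) q / (qpoch_inf (- q) q * qpoch_inf a q))"
    by (simp only: times_divide_times_eq)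
  with M rows_bound total_bound double_term_row_sums[OF q a] double_term_column_sums[OF q]
  show ?thesis
    by (rule sums_swap_dominated)
qed

lemma qpoch_inf_split_parity:
  assumes q: "norm q < 1"
  shows "qpoch_inf a q = qpoch a q k * qpoch_inf (a * q ^ k) (q\<^sup>2) * qpoch_inf (a * q ^ (k + 1)) (q\<^sup>2)"
  using qpoch_inf_split[OF q, of a k] qpoch_inf_double[OF q, of "a * q ^ k"]
  by (simp add: mult_ac)

text \<open>The \<open>k\<close>-th term multiplied by \<open>(a;q)\<^sub>\<infinity>\<close>: unlike the term itself it has no poles
  in \<open>a\<close>, which is what makes analytic continuation in \<open>a\<close> possible.\<close>

definition cleared_term :: "complex \<Rightarrow> complex \<Rightarrow> complex \<Rightarrow> nat \<Rightarrow> complex" where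
  "cleared_term q b a k = qpoch b q k / qpoch q q k * (-1) ^ k * q ^ k
     * (qpoch a q k * qpoch_inf (a * q ^ (k + 1)) (q\<^sup>2) * qpoch_inf (a * b\<^sup>2 * q ^ (2 + k)) (q\<^sup>2))"

lemma series_term_eq_cleared_term:
  assumes q: "norm q < 1" and a: "qpoch_inf a q \<noteq> 0"
  shows "qpoch b q k / qpoch q q k
           * (qpoch_inf (a * b\<^sup>2 * q ^ (2 + k)) (q\<^sup>2) / qpoch_inf (a * q ^ k) (q\<^sup>2)) * (-1) ^ k * q ^ k
         = cleared_term q b a k / qpoch_inf a q"
  using a unfolding cleared_term_def qpoch_inf_split_parity[OF q, of a k]
  by (simp add: field_simps)

lemma norm_cleared_term_le:
  assumes q: "norm q < 1"
  shows "\<exists>M. \<forall>a k. norm a \<le> R \<longrightarrow> norm (cleared_term q b a k) \<le> M * norm q ^ k"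
proof -
  have q2: "norm (q\<^sup>2) < 1"
    using q by (rule norm_power2_less_one)
  obtain MC where MC: "\<And>k. norm (qpoch b q k / qpoch q q k) \<le> MC"
    using qbinomial_coeff_bounded[OF q] by blast
  have "MC \<ge> 0"
    using order_trans[OF norm_ge_zero MC] by blast
  define M where "M = MC * (exp (R / (1 - norm q)) * exp (R / (1 - norm (q\<^sup>2)))
      * exp (norm b ^ 2 * R / (1 - norm (q\<^sup>2))))"
  have "norm (cleared_term q b a k) \<le> M * norm q ^ k" if a: "norm a \<le> R" for a k
  proof -
    have small: "norm (q ^ j) \<le> 1" for j
      using q by (simp add: norm_power power_le_one)
    have "R \<ge> 0"
      using a norm_ge_zero order_trans by blast
    hence aq: "norm a * norm q ^ j \<le> R" for j
      using mult_mono[OF a small \<open>R \<ge> 0\<close> norm_ge_zero] by (simp add: norm_power)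
    have shift1: "norm (a * q ^ (k + 1)) \<le> R"
      using aq by (simp only: norm_mult norm_power)
    have shift2: "norm (a * b\<^sup>2 * q ^ (2 + k)) \<le> norm b ^ 2 * R"
      using mult_left_mono[OF aq[of "2 + k"], of "norm b ^ 2"]
      by (simp only: norm_mult norm_power mult_ac zero_le_power2)
    have "norm (qpoch a q k * qpoch_inf (a * q ^ (k + 1)) (q\<^sup>2) * qpoch_inf (a * b\<^sup>2 * q ^ (2 + k)) (q\<^sup>2))
        \<le> exp (R / (1 - norm q)) * exp (R / (1 - norm (q\<^sup>2))) * exp (norm b ^ 2 * R / (1 - norm (q\<^sup>2)))"
      unfolding norm_mult
      by (intro mult_mono norm_qpoch_le[OF q a] norm_qpoch_inf_le[OF q2 shift1]
          norm_qpoch_inf_le[OF q2 shift2]) auto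
    hence "norm (qpoch b q k / qpoch q q k) * norm q ^ k
        * norm (qpoch a q k * qpoch_inf (a * q ^ (k + 1)) (q\<^sup>2) * qpoch_inf (a * b\<^sup>2 * q ^ (2 + k)) (q\<^sup>2))
        \<le> MC * norm q ^ k
          * (exp (R / (1 - norm q)) * exp (R / (1 - norm (q\<^sup>2))) * exp (norm b ^ 2 * R / (1 - norm (q\<^sup>2))))"
      using MC[of k] \<open>MC \<ge> 0\<close> by (intro mult_mono) auto
    thus ?thesis
      unfolding cleared_term_def M_def
      by (simp only: norm_mult norm_power norm_minus_cancel norm_one power_one mult_1_right mult_ac)
  qed
  thus ?thesis by blast
qed

lemma summable_cleared_term:
  assumes q: "norm q < 1"
  shows "summable (cleared_term q b a)"
proof -
  obtain M where M: "\<And>k. norm (cleared_term q b a k) \<le> M * norm q ^ k"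
    using norm_cleared_term_le[OF q, of "norm a" b] by blast
  show ?thesis
    using q by (intro summable_comparison_test[OF _ summable_mult[OF summable_geometric]]) (auto intro: M)
qed

lemma cleared_series_holomorphic:
  assumes q: "norm q < 1"
  shows "(\<lambda>a. \<Sum>k. cleared_term q b a k) holomorphic_on UNIV"
proof (rule holomorphic_on_UNIV_uniform_limit[where F = "\<lambda>N a. \<Sum>k<N. cleared_term q b a k"])
  show "(\<lambda>a. \<Sum>k<N. cleared_term q b a k) holomorphic_on UNIV" for N
    unfolding cleared_term_def qpoch_def
    using norm_power2_less_one[OF q] by (intro holomorphic_intros qpoch_inf_holomorphic)
  show "(\<lambda>N. \<Sum>k<N. cleared_term q b a k) \<longlonglongrightarrow> (\<Sum>k. cleared_term q b a k)" for a
    using summable_cleared_term[OF q] by (simp add: summable_LIMSEQ)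
  fix x :: complex
  obtain M where M: "\<And>a k. norm a \<le> norm x + 1 \<Longrightarrow> norm (cleared_term q b a k) \<le> M * norm q ^ k"
    using norm_cleared_term_le[OF q, of "norm x + 1" b] by blast
  show "uniformly_convergent_on (cball x 1) (\<lambda>N a. \<Sum>k<N. cleared_term q b a k)"
  proof (rule Weierstrass_m_test')
    show "summable (\<lambda>k. M * norm q ^ k)"
      using q by (intro summable_mult summable_geometric) auto
    show "norm (cleared_term q b a k) \<le> M * norm q ^ k" if "a \<in> cball x 1" for a k
      using that norm_triangle_sub[of a x] by (intro M) (auto simp: dist_norm norm_minus_commute)
  qed
qed

lemma cleared_term_sums:
  assumes q: "norm q < 1"
  shows "cleared_term q b a sums (qpoch_inf (- b * q) q * qpoch_inf (a * b * q) q / qpoch_inf (- q) q)"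
proof -
  define R where "R a = qpoch_inf (- b * q) q * qpoch_inf (a * b * q) q / qpoch_inf (- q) q" for a
  have "qpoch_inf (- q) q \<noteq> 0"
    using q by (intro qpoch_inf_nonzero_small) auto
  hence "R holomorphic_on UNIV"
    unfolding R_def using q by (intro holomorphic_intros qpoch_inf_holomorphic) auto
  moreover have "(\<Sum>k. cleared_term q b z k) = R z" if "z \<in> ball 0 1" for z
  proof -
    have z: "norm z < 1"
      using that by simp
    have P: "qpoch_inf z q \<noteq> 0"
      by (rule qpoch_inf_nonzero_small[OF q z])
    have "(\<lambda>k. cleared_term q b z k / qpoch_inf z q) sums (R z / qpoch_inf z q)"
      using series_sums_small[OF q z, of b] unfolding series_term_eq_cleared_term[OF q P]
      by (simp add: R_def)
    hence "(\<lambda>k. qpoch_inf z q * (cleared_term q b z k / qpoch_inf z q)) sums (qpoch_inf z q * (R z / qpoch_inf z q))"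
      by (rule sums_mult)
    hence "cleared_term q b z sums R z"
      using P by simp
    thus ?thesis
      by (rule sums_unique[symmetric])
  qed
  ultimately have "(\<Sum>k. cleared_term q b a k) = R a"
    using cleared_series_holomorphic[OF q] by (rule_tac analytic_continuation_open[of "ball 0 1" UNIV]) auto
  thus ?thesis
    using summable_sums[OF summable_cleared_term[OF q, of b a]] by (simp add: R_def)
qed

theorem mainTheorem3:
  fixes q a b :: complex
  assumes "0 < norm q" and "norm q < 1"
    and "\<And>j::nat. a * q ^ j \<noteq> 1"
  shows "(\<lambda>k. qpoch b q k / qpoch q q k
            * (qpoch_inf (a * b\<^sup>2 * q ^ (2 + k)) (q\<^sup>2) / qpoch_inf (a * q ^ k) (q\<^sup>2))
            * (-1) ^ k * q ^ k)
         sums (qpoch_inf (- b * q) q * qpoch_inf (a * b * q) q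
               / (qpoch_inf (- q) q * qpoch_inf a q))"
proof -
  have q: "norm q < 1" by fact
  have P: "qpoch_inf a q \<noteq> 0"
    using q assms(3) by (rule qpoch_inf_nonzero)
  show ?thesis
    unfolding series_term_eq_cleared_term[OF q P]
    using sums_divide[OF cleared_term_sums[OF q, of b a], of "qpoch_inf a q"] by simp
qed

end
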